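(* Let $N(T)$ be a $C^0$ net on a grid $T$ having the BMSDD property with constant $L$. Then the piecewise Coons patch $\mathcal{C}(N):\mathbb{R}^2\to\mathbb{R}^m$ has the BMSDD property with constant $3L$ in $\mathbb{R}^2$.
   Context: For strictly increasing bi-infinite real sequences $(s_i)$, $(t_j)$, unbounded above and below, the grid is $T=\bigcup_i\{s_i\}\times\mathbb{R}\cup\bigcup_j\mathbb{R}\times\{t_j\}$. A net $N(T)$ is a function on $T$ with values in $\mathbb{R}^m$; it is $C^0$ if all u-functions $s\mapsto N(s,t_j)$, $t\mapsto N(s_i,t)$ are continuous. The piecewise Coons patch is defined on each rectangle $[s_i,s_{i+1}]\times[t_j,t_{j+1}]$, with $h_1=s_{i+1}-s_i$, $h_2=t_{j+1}-t_j$, by $\mathcal{C}(N)(s,t)=\frac{s_{i+1}-s}{h_1}N(s_i,t)+\frac{s-s_i}{h_1}N(s_{i+1},t)+\frac{t_{j+1}-t}{h_2}N(s,t_j)+\frac{t-t_j}{h_2}N(s,t_{j+1})-B(s,t)$, with $B(s,t)=\frac{s_{i+1}-s}{h_1}\big(\frac{t_{j+1}-t}{h_2}N(s_i,t_j)+\frac{t-t_j}{h_2}N(s_i,t_{j+1})\big)+\frac{s-s_i}{h_1}\big(\frac{t_{j+1}-t}{h_2}N(s_{i+1},t_j)+\frac{t-t_j}{h_2}N(s_{i+1},t_{j+1})\big)$. For $\sigma_1\ne\sigma_2$, $\tau_1\ne\tau_2$, $[\sigma_1,\sigma_2;\tau_1,\tau_2]G=\frac{G(\sigma_1,\tau_1)+G(\sigma_2,\tau_2)-G(\sigma_2,\tau_1)-G(\sigma_1,\tau_2)}{(\sigma_1-\sigma_2)(\tau_1-\tau_2)}$.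 A net $N(T)$ has the BMSDD property with constant $L$ if $\|[\sigma_1,\sigma_2;\tau_1,\tau_2]N\|_\infty\le L$ whenever all four points $(\sigma_i,\tau_j)$ lie in $T$; a function $G$ on $\mathbb{R}^2$ has the BMSDD property with constant $L$ in $\mathbb{R}^2$ if this bound holds for all $\sigma_1\ne\sigma_2$, $\tau_1\ne\tau_2$. *)

theory Defs
  imports "HOL-Analysis.Analysis"
begin

definition knot_seq :: "(int \<Rightarrow> real) \<Rightarrow> bool" where
  "knot_seq s \<longleftrightarrow> strict_mono s \<and> (\<forall>x. \<exists>i. x < s i) \<and> (\<forall>x. \<exists>i. s i < x)"

definition grid :: "(int \<Rightarrow> real) \<Rightarrow> (int \<Rightarrow> real) \<Rightarrow> (real \<times> real) set" where
  "grid s t = {(x, y). (\<exists>i. x = s i) \<or> (\<exists>j. y = t j)}"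

text \<open>A net is represented by a function on R^2 of which only the values on the grid matter.
  It is C^0 if all u-functions are continuous.\<close>
definition C0_net :: "(int \<Rightarrow> real) \<Rightarrow> (int \<Rightarrow> real) \<Rightarrow> (real \<Rightarrow> real \<Rightarrow> 'a::topological_space) \<Rightarrow> bool" where
  "C0_net s t N \<longleftrightarrow> (\<forall>j. continuous_on UNIV (\<lambda>x. N x (t j))) \<and> (\<forall>i. continuous_on UNIV (\<lambda>y. N (s i) y))"

definition knot_idx :: "(int \<Rightarrow> real) \<Rightarrow> real \<Rightarrow> int" where
  "knot_idx s x = (THE i. s i \<le> x \<and> x < s (i + 1))"

text \<open>Piecewise Coons patch (on the closed rectangles the formula agrees on shared edges,
  so using half-open cells is no restriction).\<close>
definition coons :: "(int \<Rightarrow> real) \<Rightarrow> (int \<Rightarrow> real) \<Rightarrow> (real \<Rightarrow> real \<Rightarrow> 'a::real_vector) \<Rightarrow> real \<Rightarrow> real \<Rightarrow> 'a" where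
  "coons s t N x y =
    (let i = knot_idx s x; j = knot_idx t y;
         h1 = s (i+1) - s i; h2 = t (j+1) - t j;
         a0 = (s (i+1) - x) / h1; a1 = (x - s i) / h1;
         b0 = (t (j+1) - y) / h2; b1 = (y - t j) / h2;
         B = a0 *\<^sub>R (b0 *\<^sub>R N (s i) (t j) + b1 *\<^sub>R N (s i) (t (j+1)))
           + a1 *\<^sub>R (b0 *\<^sub>R N (s (i+1)) (t j) + b1 *\<^sub>R N (s (i+1)) (t (j+1)))
     in a0 *\<^sub>R N (s i) y + a1 *\<^sub>R N (s (i+1)) y + b0 *\<^sub>R N x (t j) + b1 *\<^sub>R N x (t (j+1)) - B)"

definition mdd :: "(real \<Rightarrow> real \<Rightarrow> 'a::real_vector) \<Rightarrow> real \<Rightarrow> real \<Rightarrow> real \<Rightarrow> real \<Rightarrow> 'a" where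
  "mdd G \<sigma>1 \<sigma>2 \<tau>1 \<tau>2 =
     (1 / ((\<sigma>1 - \<sigma>2) * (\<tau>1 - \<tau>2))) *\<^sub>R (G \<sigma>1 \<tau>1 + G \<sigma>2 \<tau>2 - G \<sigma>2 \<tau>1 - G \<sigma>1 \<tau>2)"

definition BMSDD_net :: "(int \<Rightarrow> real) \<Rightarrow> (int \<Rightarrow> real) \<Rightarrow> (real \<Rightarrow> real \<Rightarrow> real ^ 'm) \<Rightarrow> real \<Rightarrow> bool" where
  "BMSDD_net s t N L \<longleftrightarrow>
     (\<forall>\<sigma>1 \<sigma>2 \<tau>1 \<tau>2. \<sigma>1 \<noteq> \<sigma>2 \<and> \<tau>1 \<noteq> \<tau>2 \<and>
        (\<sigma>1, \<tau>1) \<in> grid s t \<and> (\<sigma>1, \<tau>2) \<in> grid s t \<and> (\<sigma>2, \<tau>1) \<in> grid s t \<and> (\<sigma>2, \<tau>2) \<in> grid s t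
        \<longrightarrow> infnorm (mdd N \<sigma>1 \<sigma>2 \<tau>1 \<tau>2) \<le> L)"

definition BMSDD_R2 :: "(real \<Rightarrow> real \<Rightarrow> real ^ 'm) \<Rightarrow> real \<Rightarrow> bool" where
  "BMSDD_R2 G L \<longleftrightarrow>
     (\<forall>\<sigma>1 \<sigma>2 \<tau>1 \<tau>2. \<sigma>1 \<noteq> \<sigma>2 \<and> \<tau>1 \<noteq> \<tau>2 \<longrightarrow> infnorm (mdd G \<sigma>1 \<sigma>2 \<tau>1 \<tau>2) \<le> L)"

end

theory Submission
  imports Defs
begin

text \<open>On a single cell the Coons patch is bilinearly blended from its boundary curves, and its
  mixed difference over any rectangle \<open>[a,b] \<times> [c,d]\<close> is an explicit combination of three
  mixed differences of the net: one with both abscissae on the vertical cell edges, one with both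
  ordinates on the horizontal cell edges, and the corner one. Each of them is controlled by the
  BMSDD constant of the net, and the blending weights exactly cancel the cell widths, so the
  patch satisfies the bound \<open>3L (b - a) (d - c)\<close> for rectangles inside one cell. Mixed
  differences are additive under subdivision of either side, so splitting an arbitrary rectangle
  along the grid lines extends the bound to all of \<open>\<real>\<^sup>2\<close>.\<close>

subsection \<open>Knot intervals\<close>

lemma knot_seq_less_iff: "knot_seq s \<Longrightarrow> s i < s k \<longleftrightarrow> i < k"
  unfolding knot_seq_def by (simp add: strict_mono_less)

lemma knot_seq_neq_next: "knot_seq s \<Longrightarrow> s i \<noteq> s (i + 1)"
  by (simp add: knot_seq_less_iff less_imp_neq)

lemma knot_interval_unique:
  assumes "knot_seq s" "s i \<le> x" "x < s (i + 1)" "s k \<le> x" "x < s (k + 1)"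
  shows "i = k"
proof -
  have "i < k + 1" "k < i + 1"
    using assms by (simp_all flip: knot_seq_less_iff[OF assms(1)])
  then show ?thesis by simp
qed

lemma knot_interval_exists:
  assumes s: "knot_seq s"
  shows "\<exists>i. s i \<le> x \<and> x < s (i + 1)"
proof -
  obtain m k where m: "s m < x" and k: "x < s k"
    using s unfolding knot_seq_def by blast
  then have "m + 1 \<le> k"
    using knot_seq_less_iff[OF s, of m k] by simp
  then have "x < s k \<longrightarrow> (\<exists>i. s i \<le> x \<and> x < s (i + 1))"
  proof (induction k rule: int_ge_induct)
    case base
    then show ?case using m by (auto intro: less_imp_le)
  next
    case (step k)
    then show ?case using not_less by blast
  qed
  then show ?thesis using k by blast
qed

lemma knot_idx_bounds:
  assumes "knot_seq s"
  shows "s (knot_idx s x) \<le> x" and "x < s (knot_idx s x + 1)"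
proof -
  have "\<exists>!i. s i \<le> x \<and> x < s (i + 1)"
    using knot_interval_exists[OF assms] knot_interval_unique[OF assms] by blast
  then have "s (knot_idx s x) \<le> x \<and> x < s (knot_idx s x + 1)"
    unfolding knot_idx_def by (rule theI')
  then show "s (knot_idx s x) \<le> x" and "x < s (knot_idx s x + 1)" by auto
qed

lemma knot_idx_eqI: "knot_seq s \<Longrightarrow> s i \<le> x \<Longrightarrow> x < s (i + 1) \<Longrightarrow> knot_idx s x = i"
  using knot_idx_bounds knot_interval_unique by metis

lemma knot_idx_knot: "knot_seq s \<Longrightarrow> knot_idx s (s k) = k"
  by (rule knot_idx_eqI) (simp_all add: knot_seq_less_iff)

lemma knot_idx_mono:
  assumes s: "knot_seq s" and "x \<le> y"
  shows "knot_idx s x \<le> knot_idx s y"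
proof -
  have "s (knot_idx s x) < s (knot_idx s y + 1)"
    using knot_idx_bounds[OF s, of x] knot_idx_bounds[OF s, of y] \<open>x \<le> y\<close> by linarith
  then show ?thesis by (simp add: knot_seq_less_iff[OF s])
qed

lemma knot_cellwise_bound_extends:
  fixes \<phi> :: "real \<Rightarrow> real \<Rightarrow> real"
  assumes s: "knot_seq s"
    and subadd: "\<And>a b c. a < b \<Longrightarrow> b < c \<Longrightarrow> \<phi> a c \<le> \<phi> a b + \<phi> b c"
    and cell: "\<And>i a b. s i \<le> a \<Longrightarrow> a < b \<Longrightarrow> b \<le> s (i + 1) \<Longrightarrow> \<phi> a b \<le> M * (b - a)"
    and "a < b"
  shows "\<phi> a b \<le> M * (b - a)"
  using \<open>a < b\<close>
proof (induction "nat (knot_idx s b - knot_idx s a)" arbitrary: a rule: less_induct)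
  case less
  define i where "i = knot_idx s a"
  have a: "s i \<le> a" "a < s (i + 1)"
    using knot_idx_bounds[OF s, of a] by (simp_all add: i_def)
  show ?case
  proof (cases "b \<le> s (i + 1)")
    case True
    then show ?thesis using cell a less.prems by blast
  next
    case False
    let ?c = "s (i + 1)"
    have "knot_idx s ?c \<le> knot_idx s b"
      using False by (intro knot_idx_mono[OF s]) simp
    then have "nat (knot_idx s b - knot_idx s ?c) < nat (knot_idx s b - knot_idx s a)"
      by (simp add: knot_idx_knot[OF s] i_def)
    then have "\<phi> ?c b \<le> M * (b - ?c)"
      using less.hyps False by simp
    moreover have "\<phi> a ?c \<le> M * (?c - a)"
      using cell a by blast
    ultimately show ?thesis
      using subadd[of a ?c b] a False by (simp add: algebra_simps)
  qed
qed

subsection \<open>Mixed differences\<close>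

definition rect_diff :: "(real \<Rightarrow> real \<Rightarrow> 'a::real_vector) \<Rightarrow> real \<Rightarrow> real \<Rightarrow> real \<Rightarrow> real \<Rightarrow> 'a" where
  "rect_diff G a b c d = G a c + G b d - G b c - G a d"

lemma rect_diff_split_x: "rect_diff G a c u v = rect_diff G a b u v + rect_diff G b c u v"
  unfolding rect_diff_def by (simp add: algebra_simps)

lemma rect_diff_split_y: "rect_diff G a b u w = rect_diff G a b u v + rect_diff G a b v w"
  unfolding rect_diff_def by (simp add: algebra_simps)

lemma infnorm_rect_diff_swap_x: "infnorm (rect_diff G b a u v) = infnorm (rect_diff G a b u v)"
  using infnorm_neg[of "rect_diff G a b u v"] by (simp add: rect_diff_def algebra_simps)

lemma infnorm_rect_diff_swap_y: "infnorm (rect_diff G a b v u) = infnorm (rect_diff G a b u v)"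
  using infnorm_neg[of "rect_diff G a b u v"] by (simp add: rect_diff_def algebra_simps)

lemma infnorm_mdd_le_iff:
  fixes G :: "real \<Rightarrow> real \<Rightarrow> 'a::euclidean_space"
  assumes "a \<noteq> b" "c \<noteq> d"
  shows "infnorm (mdd G a b c d) \<le> L \<longleftrightarrow> infnorm (rect_diff G a b c d) \<le> L * \<bar>a - b\<bar> * \<bar>c - d\<bar>"
proof -
  have "infnorm (mdd G a b c d) = infnorm (rect_diff G a b c d) / (\<bar>a - b\<bar> * \<bar>c - d\<bar>)"
    unfolding mdd_def rect_diff_def by (simp add: infnorm_mul abs_mult)
  then show ?thesis
    using assms by (simp add: divide_le_eq mult.assoc)
qed

lemma BMSDD_net_rect_diff:
  assumes "BMSDD_net s t N L"
    and "(a, c) \<in> grid s t" "(a, d) \<in> grid s t" "(b, c) \<in> grid s t" "(b, d) \<in> grid s t"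
  shows "infnorm (rect_diff N a b c d) \<le> L * \<bar>a - b\<bar> * \<bar>c - d\<bar>"
proof (cases "a = b \<or> c = d")
  case True
  then show ?thesis by (auto simp: rect_diff_def infnorm_0)
next
  case False
  then show ?thesis
    using assms by (simp add: BMSDD_net_def flip: infnorm_mdd_le_iff)
qed

lemma BMSDD_R2_if_ordered:
  assumes "\<And>a b c d. a < b \<Longrightarrow> c < d \<Longrightarrow> infnorm (rect_diff G a b c d) \<le> L * (b - a) * (d - c)"
  shows "BMSDD_R2 G L"
  unfolding BMSDD_R2_def
proof (intro allI impI)
  fix a b c d :: real
  assume ne: "a \<noteq> b \<and> c \<noteq> d"
  have "infnorm (rect_diff G a b c d) = infnorm (rect_diff G (min a b) (max a b) (min c d) (max c d))"
    by (cases "a \<le> b"; cases "c \<le> d")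
      (simp_all add: min_def max_def infnorm_rect_diff_swap_x infnorm_rect_diff_swap_y)
  also have "\<dots> \<le> L * (max a b - min a b) * (max c d - min c d)"
    using ne by (intro assms) (auto simp: min_def max_def)
  also have "\<dots> = L * \<bar>a - b\<bar> * \<bar>c - d\<bar>"
    by (simp add: min_def max_def abs_if)
  finally show "infnorm (mdd G a b c d) \<le> L"
    using ne by (simp add: infnorm_mdd_le_iff)
qed

lemma knot_cellwise_rect_diff_bound_extends:
  fixes G :: "real \<Rightarrow> real \<Rightarrow> 'a::euclidean_space"
  assumes s: "knot_seq s" and t: "knot_seq t"
    and cell: "\<And>i j a b c d. s i \<le> a \<Longrightarrow> a < b \<Longrightarrow> b \<le> s (i + 1) \<Longrightarrow>
      t j \<le> c \<Longrightarrow> c < d \<Longrightarrow> d \<le> t (j + 1) \<Longrightarrow>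
      infnorm (rect_diff G a b c d) \<le> K * (b - a) * (d - c)"
    and "a < b" "c < d"
  shows "infnorm (rect_diff G a b c d) \<le> K * (b - a) * (d - c)"
proof -
  have strip: "infnorm (rect_diff G a b c d) \<le> K * (d - c) * (b - a)"
    if y: "t j \<le> c" "c < d" "d \<le> t (j + 1)" and "a < b" for a b c d j
  proof (rule knot_cellwise_bound_extends[where \<phi> = "\<lambda>x z. infnorm (rect_diff G x z c d)", OF s _ _ \<open>a < b\<close>])
    show "infnorm (rect_diff G x z c d) \<le> infnorm (rect_diff G x y c d) + infnorm (rect_diff G y z c d)"
      for x y z
      by (simp add: rect_diff_split_x[of G x z c d y] infnorm_triangle)
    show "infnorm (rect_diff G x z c d) \<le> K * (d - c) * (z - x)"
      if "s i \<le> x" "x < z" "z \<le> s (i + 1)" for i x z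
      using cell[OF that y] by (simp only: mult_ac)
  qed
  show ?thesis
  proof (rule knot_cellwise_bound_extends[where \<phi> = "\<lambda>u w. infnorm (rect_diff G a b u w)", OF t _ _ \<open>c < d\<close>])
    show "infnorm (rect_diff G a b u w) \<le> infnorm (rect_diff G a b u v) + infnorm (rect_diff G a b v w)"
      for u v w
      by (simp add: rect_diff_split_y[of G a b u w v] infnorm_triangle)
    show "infnorm (rect_diff G a b u w) \<le> K * (b - a) * (w - u)"
      if "t j \<le> u" "u < w" "w \<le> t (j + 1)" for j u w
      using strip[OF that \<open>a < b\<close>] by (simp only: mult_ac)
  qed
qed

subsection \<open>The Coons patch of a single rectangle\<close>

definition coons_rect :: "(real \<Rightarrow> real \<Rightarrow> 'a::real_vector) \<Rightarrow> real \<Rightarrow> real \<Rightarrow> real \<Rightarrow> real \<Rightarrow> real \<Rightarrow> real \<Rightarrow> 'a" where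
  "coons_rect N x0 x1 y0 y1 x y =
    (let a0 = (x1 - x) / (x1 - x0); a1 = (x - x0) / (x1 - x0);
         b0 = (y1 - y) / (y1 - y0); b1 = (y - y0) / (y1 - y0)
     in a0 *\<^sub>R N x0 y + a1 *\<^sub>R N x1 y + b0 *\<^sub>R N x y0 + b1 *\<^sub>R N x y1
        - (a0 *\<^sub>R (b0 *\<^sub>R N x0 y0 + b1 *\<^sub>R N x0 y1) + a1 *\<^sub>R (b0 *\<^sub>R N x1 y0 + b1 *\<^sub>R N x1 y1)))"

lemma coons_rect_left: "x0 \<noteq> x1 \<Longrightarrow> coons_rect N x0 x1 y0 y1 x0 y = N x0 y"
  unfolding coons_rect_def Let_def by (simp add: scaleR_add_right)

lemma coons_rect_right: "x0 \<noteq> x1 \<Longrightarrow> coons_rect N x0 x1 y0 y1 x1 y = N x1 y"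
  unfolding coons_rect_def Let_def by (simp add: scaleR_add_right)

lemma coons_rect_bottom: "y0 \<noteq> y1 \<Longrightarrow> coons_rect N x0 x1 y0 y1 x y0 = N x y0"
  unfolding coons_rect_def Let_def by (simp add: scaleR_add_right algebra_simps)

lemma coons_rect_top: "y0 \<noteq> y1 \<Longrightarrow> coons_rect N x0 x1 y0 y1 x y1 = N x y1"
  unfolding coons_rect_def Let_def by (simp add: scaleR_add_right algebra_simps)

lemma rect_diff_coons_rect:
  assumes "x0 \<noteq> x1" "y0 \<noteq> y1"
  shows "rect_diff (coons_rect N x0 x1 y0 y1) a b c d =
      ((a - b) / (x1 - x0)) *\<^sub>R rect_diff N x1 x0 c d
    + ((c - d) / (y1 - y0)) *\<^sub>R rect_diff N a b y1 y0
    - ((a - b) * (c - d) / ((x1 - x0) * (y1 - y0))) *\<^sub>R rect_diff N x1 x0 y1 y0"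
proof -
  txt \<open>With the weights written as \<open>1 - \<alpha>\<close>, \<open>\<alpha>\<close> (and likewise for \<open>\<beta>\<close>) no division is
    left, and the identity becomes a ring identity in the values of \<open>N\<close>.\<close>
  define \<alpha> where "\<alpha> x = (x - x0) / (x1 - x0)" for x
  define \<beta> where "\<beta> y = (y - y0) / (y1 - y0)" for y
  have \<alpha>: "(x1 - x) / (x1 - x0) = 1 - \<alpha> x" "(a - b) / (x1 - x0) = \<alpha> a - \<alpha> b" for x
    using assms unfolding \<alpha>_def by (simp_all add: field_simps flip: diff_divide_distrib)
  have \<beta>: "(y1 - y) / (y1 - y0) = 1 - \<beta> y" "(c - d) / (y1 - y0) = \<beta> c - \<beta> d" for y
    using assms unfolding \<beta>_def by (simp_all add: field_simps flip: diff_divide_distrib)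
  have \<alpha>\<beta>: "(a - b) * (c - d) / ((x1 - x0) * (y1 - y0)) = (\<alpha> a - \<alpha> b) * (\<beta> c - \<beta> d)"
    by (simp flip: \<alpha>(2) \<beta>(2))
  show ?thesis
    unfolding rect_diff_def coons_rect_def Let_def \<alpha>\<beta> \<alpha> \<beta> \<alpha>_def[symmetric] \<beta>_def[symmetric]
    by (simp add: algebra_simps)
qed

lemma infnorm_scaleR_divide_le:
  fixes v :: "'a::euclidean_space"
  assumes "infnorm v \<le> K * \<bar>h\<bar>" "h \<noteq> 0"
  shows "infnorm ((p / h) *\<^sub>R v) \<le> K * \<bar>p\<bar>"
proof -
  have "infnorm ((p / h) *\<^sub>R v) = (\<bar>p\<bar> / \<bar>h\<bar>) * infnorm v"
    by (simp add: infnorm_mul)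
  also have "\<dots> \<le> (\<bar>p\<bar> / \<bar>h\<bar>) * (K * \<bar>h\<bar>)"
    using assms(1) by (rule mult_left_mono) simp
  also have "\<dots> = K * \<bar>p\<bar>"
    using assms(2) by simp
  finally show ?thesis .
qed

lemma infnorm_rect_diff_coons_rect_le:
  fixes N :: "real \<Rightarrow> real \<Rightarrow> 'a::euclidean_space"
  assumes "x0 \<noteq> x1" "y0 \<noteq> y1"
    and edges: "\<And>p q u v. {p, q} \<subseteq> {x0, x1} \<or> {u, v} \<subseteq> {y0, y1} \<Longrightarrow>
      infnorm (rect_diff N p q u v) \<le> L * \<bar>p - q\<bar> * \<bar>u - v\<bar>"
  shows "infnorm (rect_diff (coons_rect N x0 x1 y0 y1) a b c d) \<le> 3 * L * \<bar>a - b\<bar> * \<bar>c - d\<bar>"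
proof -
  let ?D1 = "((a - b) / (x1 - x0)) *\<^sub>R rect_diff N x1 x0 c d"
  let ?D2 = "((c - d) / (y1 - y0)) *\<^sub>R rect_diff N a b y1 y0"
  let ?D3 = "((a - b) * (c - d) / ((x1 - x0) * (y1 - y0))) *\<^sub>R rect_diff N x1 x0 y1 y0"
  have "infnorm ?D1 \<le> L * \<bar>a - b\<bar> * \<bar>c - d\<bar>"
    using infnorm_scaleR_divide_le[of _ "L * \<bar>c - d\<bar>" "x1 - x0" "a - b"] edges[of x1 x0 c d] assms(1)
    by (simp add: mult_ac)
  moreover have "infnorm ?D2 \<le> L * \<bar>a - b\<bar> * \<bar>c - d\<bar>"
    using infnorm_scaleR_divide_le[of _ "L * \<bar>a - b\<bar>" "y1 - y0" "c - d"] edges[of a b y1 y0] assms(2)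
    by (simp add: mult_ac)
  moreover have "infnorm ?D3 \<le> L * \<bar>a - b\<bar> * \<bar>c - d\<bar>"
    using infnorm_scaleR_divide_le[of _ L "(x1 - x0) * (y1 - y0)" "(a - b) * (c - d)"]
      edges[of x1 x0 y1 y0] assms(1,2)
    by (simp add: abs_mult mult_ac)
  moreover have "infnorm (?D1 + ?D2 - ?D3) \<le> infnorm ?D1 + infnorm ?D2 + infnorm ?D3"
    using infnorm_triangle[of "?D1 + ?D2" "- ?D3"] infnorm_triangle[of ?D1 ?D2] by (simp add: infnorm_neg)
  ultimately show ?thesis
    unfolding rect_diff_coons_rect[OF assms(1,2)] by linarith
qed

subsection \<open>The piecewise Coons patch\<close>

lemma coons_eq_coons_rect:
  "coons s t N x y = coons_rect N (s (knot_idx s x)) (s (knot_idx s x + 1))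
                                  (t (knot_idx t y)) (t (knot_idx t y + 1)) x y"
  unfolding coons_def coons_rect_def Let_def by simp

lemma coons_on_grid:
  assumes s: "knot_seq s" and t: "knot_seq t" and "(x, y) \<in> grid s t"
  shows "coons s t N x y = N x y"
proof -
  have "(\<exists>i. x = s i) \<or> (\<exists>j. y = t j)"
    using assms(3) by (simp add: grid_def)
  then show ?thesis
  proof (elim disjE exE)
    fix i assume "x = s i"
    then show ?thesis
      by (simp add: coons_eq_coons_rect knot_idx_knot[OF s] coons_rect_left knot_seq_neq_next[OF s])
  next
    fix j assume "y = t j"
    then show ?thesis
      by (simp add: coons_eq_coons_rect knot_idx_knot[OF t] coons_rect_bottom knot_seq_neq_next[OF t])
  qed
qed

lemma coons_eq_coons_rect_on_cell:
  assumes s: "knot_seq s" and t: "knot_seq t"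
    and x: "s i \<le> x" "x \<le> s (i + 1)" and y: "t j \<le> y" "y \<le> t (j + 1)"
  shows "coons s t N x y = coons_rect N (s i) (s (i + 1)) (t j) (t (j + 1)) x y"
proof (cases "x = s (i + 1) \<or> y = t (j + 1)")
  case True
  then have "coons s t N x y = N x y"
    by (intro coons_on_grid[OF s t]) (auto simp: grid_def)
  also have "\<dots> = coons_rect N (s i) (s (i + 1)) (t j) (t (j + 1)) x y"
    using True
    by (auto simp: coons_rect_right coons_rect_top knot_seq_neq_next[OF s] knot_seq_neq_next[OF t])
  finally show ?thesis .
next
  case False
  then have "knot_idx s x = i" "knot_idx t y = j"
    using x y by (simp_all add: knot_idx_eqI[OF s] knot_idx_eqI[OF t])
  then show ?thesis by (simp add: coons_eq_coons_rect)
qed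

lemma infnorm_rect_diff_coons_on_cell_le:
  assumes s: "knot_seq s" and t: "knot_seq t" and net: "BMSDD_net s t N L"
    and x: "s i \<le> a" "a < b" "b \<le> s (i + 1)" and y: "t j \<le> c" "c < d" "d \<le> t (j + 1)"
  shows "infnorm (rect_diff (coons s t N) a b c d) \<le> 3 * L * (b - a) * (d - c)"
proof -
  have "coons s t N p q = coons_rect N (s i) (s (i + 1)) (t j) (t (j + 1)) p q"
    if "p \<in> {a, b}" "q \<in> {c, d}" for p q
    using that x y by (intro coons_eq_coons_rect_on_cell[OF s t]) auto
  then have "rect_diff (coons s t N) a b c d = rect_diff (coons_rect N (s i) (s (i + 1)) (t j) (t (j + 1))) a b c d"
    unfolding rect_diff_def by simp
  also have "infnorm \<dots> \<le> 3 * L * \<bar>a - b\<bar> * \<bar>c - d\<bar>"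
  proof (rule infnorm_rect_diff_coons_rect_le)
    show "s i \<noteq> s (i + 1)" "t j \<noteq> t (j + 1)"
      by (simp_all add: knot_seq_neq_next[OF s] knot_seq_neq_next[OF t])
    show "infnorm (rect_diff N p q u v) \<le> L * \<bar>p - q\<bar> * \<bar>u - v\<bar>"
      if "{p, q} \<subseteq> {s i, s (i + 1)} \<or> {u, v} \<subseteq> {t j, t (j + 1)}" for p q u v
      using that by (intro BMSDD_net_rect_diff[OF net]) (auto simp: grid_def)
  qed
  finally show ?thesis using x y by simp
qed

theorem theorem3:
  fixes s t :: "int \<Rightarrow> real" and N :: "real \<Rightarrow> real \<Rightarrow> real ^ 'm" and L :: real
  assumes "knot_seq s" and "knot_seq t"
    and "C0_net s t N"
    and "BMSDD_net s t N L"
  shows "BMSDD_R2 (coons s t N) (3 * L)"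
proof (rule BMSDD_R2_if_ordered)
  show "infnorm (rect_diff (coons s t N) a b c d) \<le> 3 * L * (b - a) * (d - c)"
    if "a < b" "c < d" for a b c d
    by (rule knot_cellwise_rect_diff_bound_extends[OF assms(1,2)
          infnorm_rect_diff_coons_on_cell_le[OF assms(1,2,4)] that])
qed

end
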